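(* Let $L$ be an $n\times n$ nonsingular M-matrix with integer entries. If $f\in\mathbb{Z}^n$ is $z$-superstable with respect to $L$, then $D^L-f$ is a critical configuration of $L$.
   Context: A Z-matrix is a square real matrix whose off-diagonal entries are all $\le 0$. A nonsingular M-matrix is a Z-matrix $L$ that is invertible with $L^{-1}$ having all entries nonnegative (its diagonal entries are then positive). Vector inequalities are entrywise; $e_i$ is the $i$th standard basis vector. A vector $f\in\mathbb{Z}^n$ with $f\ge0$ is $z$-superstable if for every $z\in\mathbb{Z}^n$ with $z\ge0$, $z\ne0$, there is $i$ with $f_i-(Lz)_i<0$. $D^L\in\mathbb{Z}^n$ is defined by $D^L_i=L_{ii}-1$. A vector $c\in\mathbb{Z}^n$ is stable if $c_i<L_{ii}$ for all $i$ (i.e. $c\le D^L$). A vector $c\in\mathbb{Z}^n$ is a critical configuration if it is stable and there exist $g\in\mathbb{Z}^n$ with $g_i\ge L_{ii}$ for all $i$ and indices $i_1,\dots,i_k$ such that $c=g-\sum_{j=1}^kLe_{i_j}$ and, writing $g^\ell=g-\sum_{j=1}^\ell Le_{i_j}$ ($g^0=g$), one has $g^\ell_{i_{\ell+1}}\ge L_{i_{\ell+1}i_{\ell+1}}$ for all $0\le\ell<k$ (each firing in the sequence is legal). *)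

theory Defs
  imports "HOL-Analysis.Analysis"
begin

definition Z_matrix :: "int ^ 'n ^ 'n \<Rightarrow> bool" where
  "Z_matrix L \<longleftrightarrow> (\<forall>i j. i \<noteq> j \<longrightarrow> L $ i $ j \<le> 0)"

definition real_mat :: "int ^ 'n ^ 'n \<Rightarrow> real ^ 'n ^ 'n" where
  "real_mat L = (\<chi> i j. real_of_int (L $ i $ j))"

definition nonsingular_M_matrix :: "int ^ 'n ^ 'n \<Rightarrow> bool" where
  "nonsingular_M_matrix L \<longleftrightarrow> Z_matrix L \<and> invertible (real_mat L) \<and>
     (\<forall>i j. matrix_inv (real_mat L) $ i $ j \<ge> 0)"

definition z_superstable :: "int ^ 'n ^ 'n \<Rightarrow> int ^ 'n \<Rightarrow> bool" where
  "z_superstable L f \<longleftrightarrow> (\<forall>i. f $ i \<ge> 0) \<and>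
     (\<forall>z :: int ^ 'n. (\<forall>i. z $ i \<ge> 0) \<and> z \<noteq> 0 \<longrightarrow> (\<exists>i. f $ i - (L *v z) $ i < 0))"

definition D_L :: "int ^ 'n ^ 'n \<Rightarrow> int ^ 'n" where
  "D_L L = (\<chi> i. L $ i $ i - 1)"

definition stable :: "int ^ 'n ^ 'n \<Rightarrow> int ^ 'n \<Rightarrow> bool" where
  "stable L c \<longleftrightarrow> (\<forall>i. c $ i < L $ i $ i)"

definition fire :: "int ^ 'n ^ 'n \<Rightarrow> int ^ 'n \<Rightarrow> 'n \<Rightarrow> int ^ 'n" where
  "fire L c i = c - L *v (axis i 1)"

fun legal_seq :: "int ^ 'n ^ 'n \<Rightarrow> int ^ 'n \<Rightarrow> 'n list \<Rightarrow> bool" where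
  "legal_seq L g [] = True"
| "legal_seq L g (i # is) \<longleftrightarrow> g $ i \<ge> L $ i $ i \<and> legal_seq L (fire L g i) is"

definition fire_seq :: "int ^ 'n ^ 'n \<Rightarrow> int ^ 'n \<Rightarrow> 'n list \<Rightarrow> int ^ 'n" where
  "fire_seq L g is = foldl (fire L) g is"

definition critical :: "int ^ 'n ^ 'n \<Rightarrow> int ^ 'n \<Rightarrow> bool" where
  "critical L c \<longleftrightarrow> stable L c \<and>
     (\<exists>g is. (\<forall>i. g $ i \<ge> L $ i $ i) \<and> legal_seq L g is \<and> c = fire_seq L g is)"

end

theory Submission
  imports Defs
begin

(* Put c = D^L - f.  For every integer u >= 0 the configuration c + L u reaches c by a
   legal firing sequence: if u <> 0, z-superstability of f gives a vertex i with
   f_i < (L u)_i; since L is a Z-matrix this forces u_i > 0, and the inequality says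
   exactly that (c + L u)_i >= L_ii, so i may fire, leading to c + L (u - e_i), and we
   induct on the total sum of u.
   It remains to choose u so that g = c + L u satisfies g_i >= L_ii for all i, i.e.
   (L u)_i >= f_i + 1.  Since L^-1 >= 0, the real vector w = L^-1 (f + 1) is >= 0;
   scaling it by N = 1 + sum |L_ij| and rounding up yields an integer u >= 0 with
   L u >= f + 1, because rounding changes each (L u)_i by less than sum_j |L_ij|.
   Finally c is stable since f >= 0, so c is critical. *)

definition reaches :: "int ^ 'n ^ 'n \<Rightarrow> int ^ 'n \<Rightarrow> int ^ 'n \<Rightarrow> bool" where
  "reaches L g c \<longleftrightarrow> (\<exists>xs. legal_seq L g xs \<and> fire_seq L g xs = c)"

lemma reaches_refl: "reaches L c c"
  unfolding reaches_def by (intro exI[of _ "[]"]) (simp add: fire_seq_def)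

lemma reaches_fire:
  assumes "g $ i \<ge> L $ i $ i" and "reaches L (fire L g i) c"
  shows "reaches L g c"
proof -
  obtain xs where "legal_seq L (fire L g i) xs" "fire_seq L (fire L g i) xs = c"
    using assms(2) unfolding reaches_def by blast
  then show ?thesis
    using assms(1) unfolding reaches_def
    by (intro exI[of _ "i # xs"]) (simp add: fire_seq_def)
qed

lemma fire_lift:
  "fire L (c + L *v u) i = c + L *v (u - axis i 1)"
  unfolding fire_def by (simp add: matrix_vector_mult_diff_distrib)

lemma Z_matrix_image_nonpos:
  assumes Z: "Z_matrix L" and u: "\<forall>j. u $ j \<ge> 0" and ui: "u $ i = 0"
  shows "(L *v u) $ i \<le> 0"
proof -
  have "L $ i $ j * u $ j \<le> 0" for j
    using Z u ui unfolding Z_matrix_def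
    by (cases "j = i") (auto intro: mult_nonpos_nonneg)
  then show ?thesis
    unfolding matrix_vector_mult_def by (simp add: sum_nonpos)
qed

lemma superstable_firable_vertex:
  assumes Z: "Z_matrix L" and S: "z_superstable L f"
    and u: "\<forall>j. u $ j \<ge> 0" and "u \<noteq> 0"
  obtains i where "u $ i > 0" and "(D_L L - f + L *v u) $ i \<ge> L $ i $ i"
proof -
  obtain i where i: "f $ i < (L *v u) $ i"
    using S u \<open>u \<noteq> 0\<close> unfolding z_superstable_def by force
  have "f $ i \<ge> 0" using S unfolding z_superstable_def by blast
  then have "u $ i \<noteq> 0" using Z_matrix_image_nonpos[OF Z u] i by fastforce
  then have "u $ i > 0" using u by (simp add: order_less_le)
  moreover have "(D_L L - f + L *v u) $ i \<ge> L $ i $ i"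
    using i by (simp add: D_L_def)
  ultimately show thesis by (rule that)
qed

lemma superstable_lift_reaches:
  assumes Z: "Z_matrix L" and S: "z_superstable L f" and u: "\<forall>j. u $ j \<ge> 0"
  shows "reaches L (D_L L - f + L *v u) (D_L L - f)"
  using u
proof (induction "nat (sum (\<lambda>j. u $ j) UNIV)" arbitrary: u rule: less_induct)
  case (less u)
  show ?case
  proof (cases "u = 0")
    case True
    then show ?thesis by (simp add: reaches_refl)
  next
    case False
    obtain i where ui: "u $ i > 0" and legal: "(D_L L - f + L *v u) $ i \<ge> L $ i $ i"
      using superstable_firable_vertex[OF Z S less.prems False] by blast
    define u' where "u' = u - axis i 1"
    have u': "\<forall>j. u' $ j \<ge> 0"
      using less.prems ui by (auto simp: u'_def axis_def)
    have "sum (\<lambda>j. u $ j) UNIV \<ge> u $ i"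
      using less.prems by (intro member_le_sum) auto
    moreover have "sum (\<lambda>j. u' $ j) UNIV = sum (\<lambda>j. u $ j) UNIV - 1"
      unfolding u'_def by (simp add: sum_subtractf axis_def)
    ultimately have "nat (sum (\<lambda>j. u' $ j) UNIV) < nat (sum (\<lambda>j. u $ j) UNIV)"
      using ui by simp
    then have "reaches L (D_L L - f + L *v u') (D_L L - f)"
      using less.hyps u' by blast
    moreover have "fire L (D_L L - f + L *v u) i = D_L L - f + L *v u'"
      unfolding u'_def by (rule fire_lift)
    ultimately show ?thesis
      using reaches_fire[OF legal] by simp
  qed
qed

lemma matrix_inv_right:
  fixes A :: "'a::semiring_1 ^ 'n ^ 'n"
  assumes "invertible A"
  shows "A ** matrix_inv A = mat 1"
  using someI_ex[OF assms[unfolded invertible_def]] unfolding matrix_inv_def by blast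

lemma nonneg_inverse_solution:
  fixes A :: "real ^ 'n ^ 'n"
  assumes "invertible A" and "\<forall>i j. matrix_inv A $ i $ j \<ge> 0" and "\<forall>i. b $ i \<ge> 0"
  shows "A *v (matrix_inv A *v b) = b" and "\<forall>j. (matrix_inv A *v b) $ j \<ge> 0"
proof -
  show "A *v (matrix_inv A *v b) = b"
    using assms(1) by (simp add: matrix_vector_mul_assoc matrix_inv_right)
  show "\<forall>j. (matrix_inv A *v b) $ j \<ge> 0"
    using assms(2,3) by (auto simp: matrix_vector_mult_def intro!: sum_nonneg)
qed

lemma ceiling_rounding:
  fixes L :: "int ^ 'n ^ 'n" and w :: "real ^ 'n"
  shows "real_of_int ((L *v (\<chi> j. \<lceil>w $ j\<rceil>)) $ i)
           \<ge> (real_mat L *v w) $ i - (\<Sum>j\<in>UNIV. real_of_int \<bar>L $ i $ j\<bar>)"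
proof -
  define d where "d j = real_of_int \<lceil>w $ j\<rceil> - w $ j" for j
  have err: "real_of_int (L $ i $ j) * d j \<ge> - real_of_int \<bar>L $ i $ j\<bar>" for j
  proof -
    have "0 \<le> d j" "d j < 1" unfolding d_def by linarith+
    then have "\<bar>real_of_int (L $ i $ j) * d j\<bar> \<le> real_of_int \<bar>L $ i $ j\<bar>"
      by (simp add: abs_mult mult_left_le)
    then show ?thesis by linarith
  qed
  have "real_of_int ((L *v (\<chi> j. \<lceil>w $ j\<rceil>)) $ i)
        = (real_mat L *v w) $ i + (\<Sum>j\<in>UNIV. real_of_int (L $ i $ j) * d j)"
    unfolding d_def matrix_vector_mult_def real_mat_def
    by (simp add: sum.distrib[symmetric] right_diff_distrib mult.commute)
  moreover have "(\<Sum>j\<in>UNIV. real_of_int (L $ i $ j) * d j)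
                   \<ge> - (\<Sum>j\<in>UNIV. real_of_int \<bar>L $ i $ j\<bar>)"
    using sum_mono[OF err] by (simp add: sum_negf)
  ultimately show ?thesis by linarith
qed

lemma M_matrix_dominating_vector:
  fixes L :: "int ^ 'n ^ 'n" and f :: "int ^ 'n"
  assumes M: "nonsingular_M_matrix L" and f: "\<forall>i. f $ i \<ge> 0"
  obtains u where "\<forall>j. u $ j \<ge> 0" and "\<forall>i. (L *v u) $ i \<ge> f $ i + 1"
proof -
  define b where "b = (\<chi> i. real_of_int (f $ i) + 1)"
  define K where "K = (\<Sum>i\<in>UNIV. \<Sum>j\<in>UNIV. \<bar>L $ i $ j\<bar>)"
  define N where "N = real_of_int K + 1"
  define w where "w = N *\<^sub>R (matrix_inv (real_mat L) *v b)"
  define u where "u = (\<chi> j. \<lceil>w $ j\<rceil>)"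
  have b: "\<forall>i. b $ i \<ge> 0" using f by (simp add: b_def add_nonneg_nonneg)
  have K: "K \<ge> 0" unfolding K_def by (auto intro!: sum_nonneg)
  have rowK: "(\<Sum>j\<in>UNIV. real_of_int \<bar>L $ i $ j\<bar>) \<le> real_of_int K" for i
    unfolding K_def of_int_sum[symmetric] of_int_le_iff
    by (rule member_le_sum) (auto intro!: sum_nonneg)
  note sol = nonneg_inverse_solution[of "real_mat L" b]
  have Lw: "(real_mat L *v w) $ i = N * (real_of_int (f $ i) + 1)" for i
    using M b sol(1) unfolding nonsingular_M_matrix_def w_def
    by (simp add: matrix_vector_mult_scaleR b_def)
  have "w $ j \<ge> 0" for j
    using M b sol(2) K unfolding nonsingular_M_matrix_def w_def N_def by simp
  then have "\<forall>j. u $ j \<ge> 0"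
    unfolding u_def by (metis ceiling_mono ceiling_zero vec_lambda_beta)
  moreover have "(L *v u) $ i \<ge> f $ i + 1" for i
  proof -
    have "real_of_int ((L *v u) $ i) \<ge> N * (real_of_int (f $ i) + 1) - real_of_int K"
      using ceiling_rounding[of L w i] rowK[of i] Lw[of i] unfolding u_def by linarith
    moreover have "N * (real_of_int (f $ i) + 1) - real_of_int K
                   = real_of_int K * real_of_int (f $ i) + real_of_int (f $ i) + 1"
      unfolding N_def by (simp add: algebra_simps)
    moreover have "real_of_int K * real_of_int (f $ i) \<ge> 0"
      using K f by simp
    ultimately show ?thesis by linarith
  qed
  ultimately show thesis using that by blast
qed

theorem mainTheorem12:
  fixes L :: "int ^ 'n ^ 'n" and f :: "int ^ 'n"
  assumes "nonsingular_M_matrix L"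
    and "z_superstable L f"
  shows "critical L (D_L L - f)"
proof -
  have Z: "Z_matrix L" using assms(1) unfolding nonsingular_M_matrix_def by simp
  have f: "\<forall>i. f $ i \<ge> 0" using assms(2) unfolding z_superstable_def by simp
  obtain u where u: "\<forall>j. u $ j \<ge> 0" and Lu: "\<forall>i. (L *v u) $ i \<ge> f $ i + 1"
    using M_matrix_dominating_vector[OF assms(1) f] by blast
  define g where "g = D_L L - f + L *v u"
  have "(D_L L - f) $ i < L $ i $ i" for i
    using f[rule_format, of i] by (simp add: D_L_def)
  then have stable: "stable L (D_L L - f)"
    by (simp add: stable_def)
  have g: "g $ i \<ge> L $ i $ i" for i
    using Lu[rule_format, of i] by (simp add: g_def D_L_def)
  obtain xs where "legal_seq L g xs" and "fire_seq L g xs = D_L L - f"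
    using superstable_lift_reaches[OF Z assms(2) u] unfolding g_def reaches_def by blast
  then show ?thesis
    unfolding critical_def using stable g by (intro conjI exI[of _ g] exI[of _ xs]) auto
qed

end
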